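(* For every formula $\varphi$ of propositional linear temporal logic, $\mathrm{LTL} \models \neg \Box (\varphi\leftrightarrow\bigcirc\diamondsuit\neg\varphi)$.
   Context: Propositional linear temporal logic (LTL) with the "next" modality $\bigcirc$, "always" modality $\Box$ and $\diamondsuit\varphi\equiv\neg\Box\neg\varphi$ ("sometime"), interpreted over infinite sequences of states $\mathcal{K}=(\eta_0,\eta_1,\dots)$ with $\mathcal{K}_i(\bigcirc\varphi)=\mathcal{K}_{i+1}(\varphi)$, $\mathcal{K}_i(\Box\varphi)=\mathfrak{tt}$ iff $\mathcal{K}_j(\varphi)=\mathfrak{tt}$ for all $j\ge i$. $\mathrm{LTL}\models\varphi$ means validity in all temporal structures. Here $\bigcirc$ denotes the LTL "next" operator. *)

theory Defs
  imports Main
begin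

datatype 'v ltl =
    Var 'v
  | FalseF
  | Neg "'v ltl"
  | Imp "'v ltl" "'v ltl"
  | Next "'v ltl"
  | Always "'v ltl"

definition Iff :: "'v ltl \<Rightarrow> 'v ltl \<Rightarrow> 'v ltl" where
  "Iff a b = Neg (Imp (Imp a b) (Neg (Imp b a)))"

definition Sometime :: "'v ltl \<Rightarrow> 'v ltl" where
  "Sometime a = Neg (Always (Neg a))"

type_synonym 'v tstruct = "nat \<Rightarrow> ('v \<Rightarrow> bool)"

fun holds :: "'v tstruct \<Rightarrow> nat \<Rightarrow> 'v ltl \<Rightarrow> bool" where
  "holds K i (Var v) = K i v"
| "holds K i FalseF = False"
| "holds K i (Neg a) = (\<not> holds K i a)"
| "holds K i (Imp a b) = (holds K i a \<longrightarrow> holds K i b)"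
| "holds K i (Next a) = holds K (Suc i) a"
| "holds K i (Always a) = (\<forall>j\<ge>i. holds K j a)"

definition ltl_valid :: "'v ltl \<Rightarrow> bool" where
  "ltl_valid a = (\<forall>K i. holds K i a)"

end

theory Submission
  imports Defs
begin

text \<open>Along a structure, \<open>\<phi>\<close> would hold at a state exactly when it fails at some later one.
  A failure at \<open>j\<close> then forces \<open>\<phi>\<close> at all later states, yet \<open>\<phi>\<close> at \<open>j + 1\<close> demands a
  later failure; and if \<open>\<phi>\<close> never fails, the first state already demands one.\<close>

lemma no_seq_iff_later_false:
  fixes p :: "nat \<Rightarrow> bool"
  shows "\<not> (\<forall>j\<ge>i. p j \<longleftrightarrow> (\<exists>k>j. \<not> p k))"
proof
  assume H: "\<forall>j\<ge>i. p j \<longleftrightarrow> (\<exists>k>j. \<not> p k)"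
  show False
  proof (cases "\<exists>j\<ge>i. \<not> p j")
    case True
    then obtain j where "j \<ge> i" "\<not> p j" by blast
    with H have later: "\<forall>k>j. p k" by blast
    then have "p (Suc j)" by simp
    with H \<open>j \<ge> i\<close> obtain k where "k > Suc j" "\<not> p k" by auto
    with later show False by simp
  next
    case False
    then have "p i" by simp
    with H obtain k where "k > i" "\<not> p k" by auto
    with False show False by simp
  qed
qed

theorem mainTheorem3:
  fixes \<phi> :: "'v ltl"
  shows "ltl_valid (Neg (Always (Iff \<phi> (Next (Sometime (Neg \<phi>))))))"
  unfolding ltl_valid_def
proof (intro allI)
  fix K i
  have "\<not> (\<forall>j\<ge>i. holds K j \<phi> \<longleftrightarrow> (\<exists>k>j. \<not> holds K k \<phi>))"
    by (rule no_seq_iff_later_false)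
  then show "holds K i (Neg (Always (Iff \<phi> (Next (Sometime (Neg \<phi>))))))"
    by (auto simp: Iff_def Sometime_def Suc_le_eq)
qed

end
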